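(* The following parallel merge algorithm mergeHT is correct, i.e. on BSTs $T_1,T_2$ with disjoint keys it returns a BST containing the union of their keys: if $T_1$ is empty return $T_2$; if $T_2$ is empty return $T_1$; otherwise let $k$ be the root key of $T_1$; $(L_2,R_2)=\mathrm{split}(T_2,k)$; $k_1=\max(L_2)$, $k_2=\min(R_2)$; $(L_1,I)=\mathrm{split}(T_1,k_1)$; $(M,R_1)=\mathrm{split}(I,k_2)$; in parallel compute $T_L=\mathrm{mergeHT}(L_1,L_2)$ and $T_R=\mathrm{mergeHT}(R_1,R_2)$; return $\mathrm{join}(\mathrm{join}(T_L,M),T_R)$. Moreover, if merging $T_1$ and $T_2$ requires $T_1$ to be split into $k$ trees $t_1,\dots,t_k$ and $T_2$ into $j$ trees $t'_1,\dots,t'_j$ (the maximal groups of keys of one input that are contiguous in the merged sorted order), then mergeHT performs $O\left(\sum_{i=1}^k\lg(|t_i|+1)+\sum_{i=1}^j\lg(|t'_i|+1)\right)$ work.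
   Context: Trees are heterogeneous finger search trees: $\mathrm{split}(T,k)$ returns the trees of keys of $T$ less than $k$ and greater than $k$; $\mathrm{join}$ of two trees whose key ranges do not interleave returns a BST on their union; both have amortized cost $O(\lg(\min(|T_1|,|T_2|)+1))$ where $T_1,T_2$ are the two smaller trees, and worst-case cost $O(\lg\max(|T_1|,|T_2|))$. Keys are distinct. *)

theory Defs
  imports Complex_Main "HOL-Library.Tree"
begin

text \<open>Big-step semantics (with work accounting) of the algorithm mergeHT, parametric in
  the split and join operations of the underlying trees and their (actual) costs.
  mergeHT_run split join scost jcost T1 T2 T w  means: on inputs T1 T2 the algorithm
  returns T and performs total work w (sum of the costs of all split/join calls plus
  one unit per recursive invocation; parallelism does not affect work).
  If L2 is empty then max(L2) = -infinity, so split(T1,k1) = (empty, T1) and no split is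
  performed; symmetrically if R2 is empty then min(R2) = +infinity.\<close>

inductive mergeHT_run ::
  "('k::linorder tree \<Rightarrow> 'k \<Rightarrow> 'k tree \<times> 'k tree) \<Rightarrow>
   ('k tree \<Rightarrow> 'k tree \<Rightarrow> 'k tree) \<Rightarrow>
   ('k tree \<Rightarrow> 'k \<Rightarrow> real) \<Rightarrow>
   ('k tree \<Rightarrow> 'k tree \<Rightarrow> real) \<Rightarrow>
   'k tree \<Rightarrow> 'k tree \<Rightarrow> 'k tree \<Rightarrow> real \<Rightarrow> bool"
  for split join scost jcost where
  empty1: "mergeHT_run split join scost jcost Leaf T2 T2 1"
| empty2: "T1 \<noteq> Leaf \<Longrightarrow> mergeHT_run split join scost jcost T1 Leaf T1 1"
| node: "\<lbrakk> T1 = Node l k r; T2 \<noteq> Leaf;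
           (L2, R2) = split T2 k;
           (L1, I) = (if L2 = Leaf then (Leaf, T1) else split T1 (Max (set_tree L2)));
           c1 = (if L2 = Leaf then 0 else scost T1 (Max (set_tree L2)));
           (M, R1) = (if R2 = Leaf then (I, Leaf) else split I (Min (set_tree R2)));
           c2 = (if R2 = Leaf then 0 else scost I (Min (set_tree R2)));
           mergeHT_run split join scost jcost L1 L2 TL wL;
           mergeHT_run split join scost jcost R1 R2 TR wR \<rbrakk>
        \<Longrightarrow> mergeHT_run split join scost jcost T1 T2 (join (join TL M) TR)
              (1 + scost T2 k + c1 + c2 + wL + wR + jcost TL M + jcost (join TL M) TR)"

text \<open>The maximal groups of keys of A that are contiguous in the sorted order of A \<union> B
  (two keys of A are in the same group iff no key of B lies strictly between them).\<close>
definition groups :: "'k::linorder set \<Rightarrow> 'k set \<Rightarrow> 'k set set" where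
  "groups A B = {{a' \<in> A. \<not> (\<exists>b\<in>B. min a a' < b \<and> b < max a a')} | a. a \<in> A}"

end

theory Submission
  imports Defs
begin

(* Correctness: the two bracketing keys taken from T2 are the neighbours in T2 of the root key k
   of T1, so the middle piece M is exactly the group of T1 containing k, and L1 \<union> L2, M, R1 \<union> R2
   are consecutive blocks of the merged order. Hence both joins are legal, and the groups of the
   inputs are those of the two subproblems together with M.

   Work: every call on inputs of sizes u and v holds a credit c (lg u + lg v + lg (u + v)), where
   lg n = log 2 (n + 1). Because lg (min u v) + lg (u + v) <= lg u + lg v + 1, the credit released
   by the three splits and the two joins of a call pays for their amortized costs up to O(lg |M|),
   which is charged to the group M. *)

definition lg :: "nat \<Rightarrow> real" where
  "lg n = log 2 (real n + 1)"

lemma lg_0 [simp]: "lg 0 = 0"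
  by (simp add: lg_def)

lemma lg_nonneg: "0 \<le> lg n"
  by (simp add: lg_def)

lemma lg_mono: "m \<le> n \<Longrightarrow> lg m \<le> lg n"
  by (simp add: lg_def)

lemma lg_ge_1: "1 \<le> n \<Longrightarrow> 1 \<le> lg n"
  by (simp add: lg_def)

lemma lg_add_le: "lg (m + n) \<le> lg m + lg n"
proof -
  have "log 2 (real (m + n) + 1) \<le> log 2 ((real m + 1) * (real n + 1))"
    by (subst log_le_cancel_iff) (auto simp: algebra_simps intro: add_pos_nonneg)
  also have "\<dots> = log 2 (real m + 1) + log 2 (real n + 1)"
    by (simp add: log_mult_pos)
  finally show ?thesis
    by (simp add: lg_def)
qed

lemma lg_min_add_le: "lg (min m n) + lg (m + n) \<le> lg m + lg n + 1"
proof -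
  have "log 2 (real (m + n) + 1) \<le> log 2 (2 * (real (max m n) + 1))"
    by (subst log_le_cancel_iff) auto
  also have "\<dots> = 1 + log 2 (real (max m n) + 1)"
    by (subst log_mult_pos) auto
  finally have "lg (m + n) \<le> lg (max m n) + 1"
    by (simp add: lg_def)
  moreover have "lg (min m n) + lg (max m n) = lg m + lg n"
    by (simp add: min_def max_def)
  ultimately show ?thesis
    by linarith
qed

definition merge_credit :: "nat \<Rightarrow> nat \<Rightarrow> real" where
  "merge_credit m n = lg m + lg n + lg (m + n)"

lemma merge_credit_nonneg: "0 \<le> merge_credit m n"
  by (simp add: merge_credit_def lg_nonneg add_nonneg_nonneg)

lemma merge_step_lg_bound:
  assumes "1 \<le> m"
  shows "lg (min p q) + lg (min a (m + r)) + lg (min m r) + lg (min (a + p) m)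
           + lg (min (a + p + m) (r + q)) + merge_credit (a + m + r) (p + q)
         \<le> merge_credit a p + merge_credit r q + 7 * lg m"
proof -
  have "lg (min p q) + lg (p + q) \<le> lg p + lg q + 1"
    by (rule lg_min_add_le)
  moreover have "lg (min a (m + r)) + lg (a + m + r) \<le> lg a + lg m + lg r + 1"
    using lg_min_add_le[of a "m + r"] lg_add_le[of m r] by (simp add: add.assoc)
  moreover have "lg (min (a + p + m) (r + q)) + lg (a + m + r + (p + q))
                   \<le> lg (a + p) + lg m + lg (r + q) + 1"
    using lg_min_add_le[of "a + p + m" "r + q"] lg_add_le[of "a + p" m]
    by (simp add: ac_simps)
  moreover have "lg (min m r) \<le> lg m" and "lg (min (a + p) m) \<le> lg m"
    by (simp_all add: lg_mono)
  moreover have "1 \<le> lg m"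
    using assms by (rule lg_ge_1)
  ultimately show ?thesis
    unfolding merge_credit_def by linarith
qed

lemma groups_cong:
  assumes "\<And>x x' y. x \<in> A \<Longrightarrow> x' \<in> A \<Longrightarrow> x < y \<Longrightarrow> y < x' \<Longrightarrow> y \<in> B \<longleftrightarrow> y \<in> B'"
  shows "groups A B = groups A B'"
proof -
  have "{a' \<in> A. \<not> (\<exists>b\<in>B. min a a' < b \<and> b < max a a')}
          = {a' \<in> A. \<not> (\<exists>b\<in>B'. min a a' < b \<and> b < max a a')}" if "a \<in> A" for a
  proof -
    have "min a a' \<in> A" "max a a' \<in> A" if "a' \<in> A" for a'
      using \<open>a \<in> A\<close> that by (simp_all add: min_def max_def)
    then show ?thesis
      using assms by blast
  qed
  then show ?thesis
    unfolding groups_def Setcompr_eq_image by (rule image_cong[OF refl])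
qed

lemma groups_Un_separated:
  assumes "\<forall>x\<in>A1. \<forall>y\<in>A2. \<exists>b\<in>B. x < b \<and> b < y"
  shows "groups (A1 \<union> A2) B = groups A1 B \<union> groups A2 B"
proof -
  have sep: "\<exists>b\<in>B. min x y < b \<and> b < max x y" if "x \<in> A1" "y \<in> A2" for x y
    using assms that by (fastforce simp: min_def max_def)
  have "{a' \<in> A1 \<union> A2. \<not> (\<exists>b\<in>B. min a a' < b \<and> b < max a a')}
          = {a' \<in> A1. \<not> (\<exists>b\<in>B. min a a' < b \<and> b < max a a')}" if "a \<in> A1" for a
    using that sep by auto
  moreover have "{a' \<in> A1 \<union> A2. \<not> (\<exists>b\<in>B. min a a' < b \<and> b < max a a')}
          = {a' \<in> A2. \<not> (\<exists>b\<in>B. min a a' < b \<and> b < max a a')}" if "a \<in> A2" for a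
    using that sep by (fastforce simp: min.commute max.commute)
  ultimately show ?thesis
    unfolding groups_def by blast
qed

lemma groups_Un_outside:
  assumes "\<forall>b\<in>B'. (\<forall>a\<in>A. b < a) \<or> (\<forall>a\<in>A. a < b)"
  shows "groups A (B \<union> B') = groups A B"
proof (rule groups_cong)
  fix x x' y assume "x \<in> A" "x' \<in> A" "x < y" "y < x'"
  with assms show "y \<in> B \<union> B' \<longleftrightarrow> y \<in> B"
    by (metis UnE UnI1 less_asym)
qed

lemma groups_empty_left [simp]: "groups {} B = {}"
  unfolding groups_def by simp

lemma groups_empty_right: "A \<noteq> {} \<Longrightarrow> groups A {} = {A}"
  unfolding groups_def by auto

lemma groups_subset_nonempty: "S \<in> groups A B \<Longrightarrow> S \<subseteq> A \<and> S \<noteq> {}"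
  unfolding groups_def by auto

lemma finite_groups: "finite A \<Longrightarrow> finite (groups A B)"
  unfolding groups_def by simp

definition group_cost :: "'k::linorder set \<Rightarrow> 'k set \<Rightarrow> real" where
  "group_cost A B = (\<Sum>S\<in>groups A B. lg (card S))"

lemma group_cost_empty_left [simp]: "group_cost {} B = 0"
  by (simp add: group_cost_def)

lemma group_cost_empty_right [simp]: "group_cost A {} = lg (card A)"
  by (cases "A = {}") (simp_all add: group_cost_def groups_empty_right)

lemma group_cost_Un_separated:
  assumes "finite A1" and "finite A2" and "\<forall>x\<in>A1. \<forall>y\<in>A2. \<exists>b\<in>B. x < b \<and> b < y"
  shows "group_cost (A1 \<union> A2) B = group_cost A1 B + group_cost A2 B"
proof -
  have "A1 \<inter> A2 = {}"
    using assms(3) by fastforce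
  then have "groups A1 B \<inter> groups A2 B = {}"
    using groups_subset_nonempty by blast
  then show ?thesis
    unfolding group_cost_def groups_Un_separated[OF assms(3)]
    using assms(1,2) by (simp add: finite_groups sum.union_disjoint)
qed

(* The merged order consists of the consecutive blocks AL \<union> BL, AM and AR \<union> BR, where AM is a group
   of A = AL \<union> AM \<union> AR and the keys adjacent to AM belong to B = BL \<union> BR. *)
definition pivot_blocks :: "'k::linorder set \<Rightarrow> 'k set \<Rightarrow> 'k set \<Rightarrow> 'k set \<Rightarrow> 'k set \<Rightarrow> bool" where
  "pivot_blocks AL AM AR BL BR \<longleftrightarrow> AM \<noteq> {} \<and>
     (\<forall>x\<in>AL \<union> BL. \<forall>y\<in>AM. x < y) \<and> (\<forall>x\<in>AM. \<forall>y\<in>AR \<union> BR. x < y) \<and>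
     (\<forall>a\<in>AL. \<exists>b\<in>BL. a < b) \<and> (\<forall>a\<in>AR. \<exists>b\<in>BR. b < a)"

lemma pivot_blocks_less:
  "pivot_blocks AL AM AR BL BR \<Longrightarrow> \<forall>x\<in>AL \<union> BL \<union> AM. \<forall>y\<in>AR \<union> BR. x < y"
  unfolding pivot_blocks_def by (metis Un_iff all_not_in_conv less_trans)

lemma group_cost_pivot_blocks:
  assumes blocks: "pivot_blocks AL AM AR BL BR"
    and fin: "finite AL" "finite AM" "finite AR" "finite BL" "finite BR"
  shows "group_cost (AL \<union> AM \<union> AR) (BL \<union> BR) + group_cost (BL \<union> BR) (AL \<union> AM \<union> AR)
           = (group_cost AL BL + group_cost BL AL) + (group_cost AR BR + group_cost BR AR) + lg (card AM)"
proof -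
  have L_M: "\<forall>x\<in>AL \<union> BL. \<forall>y\<in>AM. x < y" and M_R: "\<forall>x\<in>AM. \<forall>y\<in>AR \<union> BR. x < y"
    and L_R: "\<forall>x\<in>AL \<union> BL. \<forall>y\<in>AR \<union> BR. x < y" and "AM \<noteq> {}"
    and AL_BL: "\<forall>a\<in>AL. \<exists>b\<in>BL. a < b" and AR_BR: "\<forall>a\<in>AR. \<exists>b\<in>BR. b < a"
    using blocks pivot_blocks_less[OF blocks] unfolding pivot_blocks_def by blast+
  have "\<forall>x\<in>AL. \<forall>y\<in>AM \<union> AR. \<exists>b\<in>BL \<union> BR. x < b \<and> b < y"
    and "\<forall>x\<in>AM. \<forall>y\<in>AR. \<exists>b\<in>BL \<union> BR. x < b \<and> b < y"
    and "\<forall>x\<in>BL. \<forall>y\<in>BR. \<exists>a\<in>AL \<union> AM \<union> AR. x < a \<and> a < y"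
    using L_M M_R L_R AL_BL AR_BR \<open>AM \<noteq> {}\<close> by blast+
  then have "group_cost (AL \<union> AM \<union> AR) (BL \<union> BR)
               = group_cost AL (BL \<union> BR) + group_cost AM (BL \<union> BR) + group_cost AR (BL \<union> BR)"
    and "group_cost (BL \<union> BR) (AL \<union> AM \<union> AR)
               = group_cost BL (AL \<union> AM \<union> AR) + group_cost BR (AL \<union> AM \<union> AR)"
    using fin by (simp_all add: group_cost_Un_separated Un_assoc)
  moreover have "groups AL (BL \<union> BR) = groups AL BL" and "groups AR (BR \<union> BL) = groups AR BR"
    and "groups AM ({} \<union> (BL \<union> BR)) = groups AM {}"
    and "groups BL (AL \<union> (AM \<union> AR)) = groups BL AL" and "groups BR (AR \<union> (AL \<union> AM)) = groups BR AR"
    using L_M M_R L_R by (intro groups_Un_outside; blast)+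
  ultimately show ?thesis
    using \<open>AM \<noteq> {}\<close> by (simp add: group_cost_def groups_empty_right Un_commute Un_left_commute Un_assoc)
qed

lemma size_eq_card_if_bst: "bst t \<Longrightarrow> size t = card (set_tree t)"
  by (metis bst_iff_sorted_wrt_less distinct_card length_inorder set_inorder strict_sorted_iff)

lemma size_eq_add_if_bst:
  assumes "bst t" "bst u" "bst v" "set_tree t = set_tree u \<union> set_tree v" "set_tree u \<inter> set_tree v = {}"
  shows "size t = size u + size v"
  using assms by (simp add: size_eq_card_if_bst card_Un_disjoint)

locale amortized_split_join =
  fixes split :: "'k::linorder tree \<Rightarrow> 'k \<Rightarrow> 'k tree \<times> 'k tree"
    and join :: "'k tree \<Rightarrow> 'k tree \<Rightarrow> 'k tree"
    and scost :: "'k tree \<Rightarrow> 'k \<Rightarrow> real"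
    and jcost :: "'k tree \<Rightarrow> 'k tree \<Rightarrow> real"
    and \<Phi> :: "'k tree \<Rightarrow> real"
    and c :: real
  assumes split_spec: "\<And>T k L R. bst T \<Longrightarrow> split T k = (L, R) \<Longrightarrow>
             bst L \<and> bst R \<and> set_tree L = {x \<in> set_tree T. x < k} \<and> set_tree R = {x \<in> set_tree T. k < x}"
    and join_spec: "\<And>A B. bst A \<Longrightarrow> bst B \<Longrightarrow> (\<forall>x\<in>set_tree A. \<forall>y\<in>set_tree B. x < y) \<Longrightarrow>
             bst (join A B) \<and> set_tree (join A B) = set_tree A \<union> set_tree B"
    and pot_nonneg: "\<And>T. 0 \<le> \<Phi> T"
    and scost_nonneg: "\<And>T k. 0 \<le> scost T k"
    and c_nonneg: "0 \<le> c"
    and split_amortized: "\<And>T k L R. bst T \<Longrightarrow> split T k = (L, R) \<Longrightarrow>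
             scost T k + \<Phi> L + \<Phi> R - \<Phi> T \<le> c * lg (min (size L) (size R))"
    and join_amortized: "\<And>A B. bst A \<Longrightarrow> bst B \<Longrightarrow> (\<forall>x\<in>set_tree A. \<forall>y\<in>set_tree B. x < y) \<Longrightarrow>
             jcost A B + \<Phi> (join A B) - \<Phi> A - \<Phi> B \<le> c * lg (min (size A) (size B))"
begin

lemma pot_Leaf: "\<Phi> Leaf = 0"
proof -
  fix k
  obtain L R where split: "split Leaf k = (L, R)"
    by fastforce
  then have "L = Leaf" "R = Leaf"
    using split_spec[OF _ split] by auto
  then have "scost Leaf k + \<Phi> Leaf \<le> 0"
    using split_amortized[OF _ split] by simp
  then show ?thesis
    using scost_nonneg[of Leaf k] pot_nonneg[of Leaf] by linarith
qed

lemma split_at_Max: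
  assumes "bst T" and "set_tree B \<inter> set_tree T = {}"
    and LR: "(L, R) = (if B = Leaf then (Leaf, T) else split T (Max (set_tree B)))"
  shows "bst L \<and> bst R \<and> set_tree T = set_tree L \<union> set_tree R \<and>
           (\<forall>x\<in>set_tree L. \<exists>b\<in>set_tree B. x < b) \<and> (\<forall>x\<in>set_tree R. \<forall>b\<in>set_tree B. b < x)" (is ?pieces)
    and "(if B = Leaf then 0 else scost T (Max (set_tree B))) + \<Phi> L + \<Phi> R - \<Phi> T
           \<le> c * lg (min (size L) (size R))" (is ?cost)
proof -
  have "?pieces \<and> ?cost"
  proof (cases "B = Leaf")
    case True
    with assms show ?thesis
      by (simp add: pot_Leaf)
  next
    case False
    let ?b = "Max (set_tree B)"
    have split_T: "split T ?b = (L, R)"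
      using False LR by simp
    have L: "set_tree L = {x \<in> set_tree T. x < ?b}" and R: "set_tree R = {x \<in> set_tree T. ?b < x}"
      using split_spec[OF assms(1) split_T] by blast+
    have "?b \<in> set_tree B"
      using False by (simp add: Max_in)
    then have "x < ?b \<or> ?b < x" if "x \<in> set_tree T" for x
      using that assms(2) by (metis disjoint_iff neq_iff)
    then have "set_tree T = set_tree L \<union> set_tree R"
      unfolding L R by blast
    moreover have "\<forall>x\<in>set_tree L. \<exists>b\<in>set_tree B. x < b"
      using L \<open>?b \<in> set_tree B\<close> by blast
    moreover have "\<forall>x\<in>set_tree R. \<forall>b\<in>set_tree B. b < x"
      using R False by simp
    moreover have "bst L" "bst R"
      using split_spec[OF assms(1) split_T] by blast+
    moreover have ?cost
      using split_amortized[OF assms(1) split_T] False by simp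
    ultimately show ?thesis
      by blast
  qed
  then show ?pieces ?cost
    by blast+
qed

lemma split_at_Min:
  assumes "bst T" and "set_tree B \<inter> set_tree T = {}"
    and LR: "(L, R) = (if B = Leaf then (T, Leaf) else split T (Min (set_tree B)))"
  shows "bst L \<and> bst R \<and> set_tree T = set_tree L \<union> set_tree R \<and>
           (\<forall>x\<in>set_tree L. \<forall>b\<in>set_tree B. x < b) \<and> (\<forall>x\<in>set_tree R. \<exists>b\<in>set_tree B. b < x)" (is ?pieces)
    and "(if B = Leaf then 0 else scost T (Min (set_tree B))) + \<Phi> L + \<Phi> R - \<Phi> T
           \<le> c * lg (min (size L) (size R))" (is ?cost)
proof -
  have "?pieces \<and> ?cost"
  proof (cases "B = Leaf")
    case True
    with assms show ?thesis
      by (simp add: pot_Leaf)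
  next
    case False
    let ?b = "Min (set_tree B)"
    have split_T: "split T ?b = (L, R)"
      using False LR by simp
    have L: "set_tree L = {x \<in> set_tree T. x < ?b}" and R: "set_tree R = {x \<in> set_tree T. ?b < x}"
      using split_spec[OF assms(1) split_T] by blast+
    have "?b \<in> set_tree B"
      using False by (simp add: Min_in)
    then have "x < ?b \<or> ?b < x" if "x \<in> set_tree T" for x
      using that assms(2) by (metis disjoint_iff neq_iff)
    then have "set_tree T = set_tree L \<union> set_tree R"
      unfolding L R by blast
    moreover have "\<forall>x\<in>set_tree L. \<forall>b\<in>set_tree B. x < b"
      using L False by simp
    moreover have "\<forall>x\<in>set_tree R. \<exists>b\<in>set_tree B. b < x"
      using R \<open>?b \<in> set_tree B\<close> by blast
    moreover have "bst L" "bst R"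
      using split_spec[OF assms(1) split_T] by blast+
    moreover have ?cost
      using split_amortized[OF assms(1) split_T] False by simp
    ultimately show ?thesis
      by blast
  qed
  then show ?pieces ?cost
    by blast+
qed

lemma mergeHT_node_blocks:
  assumes "bst T1" and "bst T2" and disj: "set_tree T1 \<inter> set_tree T2 = {}" and "T1 = Node l k r"
    and split_T2: "(L2, R2) = split T2 k"
    and split_T1: "(L1, I) = (if L2 = Leaf then (Leaf, T1) else split T1 (Max (set_tree L2)))"
    and split_I: "(M, R1) = (if R2 = Leaf then (I, Leaf) else split I (Min (set_tree R2)))"
  shows "bst L1 \<and> bst L2 \<and> bst I \<and> bst M \<and> bst R1 \<and> bst R2"
    and "set_tree T1 = set_tree L1 \<union> set_tree I" and "set_tree I = set_tree M \<union> set_tree R1"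
    and "set_tree T2 = set_tree L2 \<union> set_tree R2"
    and "pivot_blocks (set_tree L1) (set_tree M) (set_tree R1) (set_tree L2) (set_tree R2)"
proof -
  have "k \<in> set_tree T1" and "k \<notin> set_tree T2"
    using \<open>T1 = Node l k r\<close> disj by auto
  have T2: "bst L2 \<and> bst R2 \<and> set_tree L2 = {x \<in> set_tree T2. x < k} \<and> set_tree R2 = {x \<in> set_tree T2. k < x}"
    using split_spec[OF \<open>bst T2\<close> split_T2[symmetric]] .
  then have "set_tree L2 \<inter> set_tree T1 = {}"
    using disj by blast
  note T1 = split_at_Max(1)[OF \<open>bst T1\<close> this split_T1]
  have "bst I" and "set_tree R2 \<inter> set_tree I = {}"
    using T1 T2 disj by blast+
  note I = split_at_Min(1)[OF this split_I]
  show "bst L1 \<and> bst L2 \<and> bst I \<and> bst M \<and> bst R1 \<and> bst R2"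
    using T1 T2 I by blast
  show "set_tree T1 = set_tree L1 \<union> set_tree I" and "set_tree I = set_tree M \<union> set_tree R1"
    using T1 I by blast+
  have "x < k \<or> k < x" if "x \<in> set_tree T2" for x
    using that \<open>k \<notin> set_tree T2\<close> by (metis neq_iff)
  then show "set_tree T2 = set_tree L2 \<union> set_tree R2"
    using T2 by blast
  have L1_below: "\<forall>x\<in>set_tree L1. \<exists>b\<in>set_tree L2. x < b"
    and I_above: "\<forall>x\<in>set_tree I. \<forall>b\<in>set_tree L2. b < x"
    and M_below: "\<forall>x\<in>set_tree M. \<forall>b\<in>set_tree R2. x < b"
    and R1_above: "\<forall>x\<in>set_tree R1. \<exists>b\<in>set_tree R2. b < x"
    using T1 I by blast+
  have "k \<notin> set_tree L1" and "k \<notin> set_tree R1"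
    using L1_below R1_above T2 by (fastforce dest: less_asym)+
  then have "k \<in> set_tree M"
    using \<open>k \<in> set_tree T1\<close> T1 I by blast
  moreover have "\<forall>x\<in>set_tree L1 \<union> set_tree L2. \<forall>y\<in>set_tree M. x < y"
    using L1_below I_above I by (fastforce dest: less_trans)
  moreover have "\<forall>x\<in>set_tree M. \<forall>y\<in>set_tree R1 \<union> set_tree R2. x < y"
    using M_below R1_above by (fastforce dest: less_trans)
  ultimately show "pivot_blocks (set_tree L1) (set_tree M) (set_tree R1) (set_tree L2) (set_tree R2)"
    unfolding pivot_blocks_def using L1_below R1_above by blast
qed

lemma join_join:
  assumes "bst A" "bst B" "bst C"
    and "\<forall>x\<in>set_tree A. \<forall>y\<in>set_tree B. x < y" and "\<forall>x\<in>set_tree A \<union> set_tree B. \<forall>y\<in>set_tree C. x < y"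
  shows "bst (join (join A B) C) \<and> set_tree (join (join A B) C) = set_tree A \<union> set_tree B \<union> set_tree C"
    and "jcost A B + jcost (join A B) C + \<Phi> (join (join A B) C) - \<Phi> A - \<Phi> B - \<Phi> C
           \<le> c * (lg (min (size A) (size B)) + lg (min (size A + size B) (size C)))"
proof -
  have AB: "bst (join A B)" "set_tree (join A B) = set_tree A \<union> set_tree B"
    using join_spec[OF assms(1,2,4)] by blast+
  then show "bst (join (join A B) C) \<and> set_tree (join (join A B) C) = set_tree A \<union> set_tree B \<union> set_tree C"
    using join_spec[OF AB(1) assms(3)] assms(5) by simp
  have "size (join A B) = size A + size B"
    using AB assms(1,2,4) by (intro size_eq_add_if_bst) auto
  then show "jcost A B + jcost (join A B) C + \<Phi> (join (join A B) C) - \<Phi> A - \<Phi> B - \<Phi> C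
               \<le> c * (lg (min (size A) (size B)) + lg (min (size A + size B) (size C)))"
    using join_amortized[OF assms(1,2,4)] join_amortized[OF AB(1) assms(3)] assms(5) AB(2)
    unfolding distrib_left by simp
qed

lemma mergeHT_node_cost:
  assumes "bst T1" and "bst T2" and disj: "set_tree T1 \<inter> set_tree T2 = {}" and "T1 = Node l k r"
    and split_T2: "(L2, R2) = split T2 k"
    and split_T1: "(L1, I) = (if L2 = Leaf then (Leaf, T1) else split T1 (Max (set_tree L2)))"
    and c1: "c1 = (if L2 = Leaf then 0 else scost T1 (Max (set_tree L2)))"
    and split_I: "(M, R1) = (if R2 = Leaf then (I, Leaf) else split I (Min (set_tree R2)))"
    and c2: "c2 = (if R2 = Leaf then 0 else scost I (Min (set_tree R2)))"
    and TL: "bst TL" "set_tree TL = set_tree L1 \<union> set_tree L2"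
    and TR: "bst TR" "set_tree TR = set_tree R1 \<union> set_tree R2"
  shows "size T1 = size L1 + size M + size R1" and "size T2 = size L2 + size R2"
    and "scost T2 k + c1 + c2 + jcost TL M + jcost (join TL M) TR + \<Phi> (join (join TL M) TR)
           - \<Phi> T1 - \<Phi> T2 - (\<Phi> TL - \<Phi> L1 - \<Phi> L2) - (\<Phi> TR - \<Phi> R1 - \<Phi> R2)
         \<le> c * (lg (min (size L2) (size R2)) + lg (min (size L1) (size M + size R1))
                + lg (min (size M) (size R1)) + lg (min (size L1 + size L2) (size M))
                + lg (min (size L1 + size L2 + size M) (size R1 + size R2)))"
proof -
  note blocks = mergeHT_node_blocks[OF assms(1-6) split_I]
  have bsts: "bst L1" "bst L2" "bst I" "bst M" "bst R1" "bst R2"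
    using blocks(1) by blast+
  have "set_tree L1 \<inter> set_tree I = {}" and "set_tree M \<inter> set_tree R1 = {}"
    and "set_tree L2 \<inter> set_tree R2 = {}"
    using blocks(5) pivot_blocks_less[OF blocks(5)] unfolding blocks(3) pivot_blocks_def by fastforce+
  moreover have "set_tree L1 \<inter> set_tree L2 = {}" and "set_tree R1 \<inter> set_tree R2 = {}"
    using blocks(2-4) disj by blast+
  ultimately have "size I = size M + size R1" and "size T1 = size L1 + size I" and "size T2 = size L2 + size R2"
    and "size TL = size L1 + size L2" and "size TR = size R1 + size R2"
    using size_eq_add_if_bst[OF bsts(3-5) blocks(3)] size_eq_add_if_bst[OF \<open>bst T1\<close> bsts(1,3) blocks(2)]
      size_eq_add_if_bst[OF \<open>bst T2\<close> bsts(2,6) blocks(4)]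
      size_eq_add_if_bst[OF TL(1) bsts(1,2) TL(2)] size_eq_add_if_bst[OF TR(1) bsts(5,6) TR(2)]
    by simp_all
  then show "size T1 = size L1 + size M + size R1" and "size T2 = size L2 + size R2"
    by simp_all
  have "set_tree L2 \<inter> set_tree T1 = {}" and "set_tree R2 \<inter> set_tree I = {}"
    using blocks(2,4) disj by blast+
  moreover have "\<forall>x\<in>set_tree TL. \<forall>y\<in>set_tree M. x < y"
    and "\<forall>x\<in>set_tree TL \<union> set_tree M. \<forall>y\<in>set_tree TR. x < y"
    using blocks(5) pivot_blocks_less[OF blocks(5)] unfolding TL(2) TR(2) pivot_blocks_def by blast+
  ultimately show "scost T2 k + c1 + c2 + jcost TL M + jcost (join TL M) TR + \<Phi> (join (join TL M) TR)
           - \<Phi> T1 - \<Phi> T2 - (\<Phi> TL - \<Phi> L1 - \<Phi> L2) - (\<Phi> TR - \<Phi> R1 - \<Phi> R2)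
         \<le> c * (lg (min (size L2) (size R2)) + lg (min (size L1) (size M + size R1))
                + lg (min (size M) (size R1)) + lg (min (size L1 + size L2) (size M))
                + lg (min (size L1 + size L2 + size M) (size R1 + size R2)))"
    using split_amortized[OF \<open>bst T2\<close> split_T2[symmetric]]
      split_at_Max(2)[OF \<open>bst T1\<close> _ split_T1] split_at_Min(2)[OF bsts(3) _ split_I]
      join_join(2)[OF TL(1) bsts(4) TR(1)] \<open>size I = size M + size R1\<close>
      \<open>size TL = size L1 + size L2\<close> \<open>size TR = size R1 + size R2\<close>
    unfolding c1 c2 distrib_left by simp
qed

lemma mergeHT_run_exists:
  "bst T1 \<Longrightarrow> bst T2 \<Longrightarrow> set_tree T1 \<inter> set_tree T2 = {} \<Longrightarrow>
     \<exists>T w. mergeHT_run split join scost jcost T1 T2 T w"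
proof (induction "card (set_tree T1) + card (set_tree T2)" arbitrary: T1 T2 rule: less_induct)
  case less
  show ?case
  proof (cases "T1 = Leaf \<or> T2 = Leaf")
    case True
    then show ?thesis
      using mergeHT_run.empty1 mergeHT_run.empty2 by metis
  next
    case False
    then obtain l k r where T1: "T1 = Node l k r" and "T2 \<noteq> Leaf"
      by (cases T1) auto
    obtain L2 R2 where split_T2: "(L2, R2) = split T2 k"
      by (metis surj_pair)
    obtain L1 I where split_T1: "(L1, I) = (if L2 = Leaf then (Leaf, T1) else split T1 (Max (set_tree L2)))"
      by (metis surj_pair)
    obtain M R1 where split_I: "(M, R1) = (if R2 = Leaf then (I, Leaf) else split I (Min (set_tree R2)))"
      by (metis surj_pair)
    note blocks = mergeHT_node_blocks[OF less.prems T1 split_T2 split_T1 split_I]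
    obtain m where "m \<in> set_tree M" and "\<forall>x\<in>set_tree L1. x < m" and "\<forall>x\<in>set_tree R1. m < x"
      using blocks(5) unfolding pivot_blocks_def by blast
    then have "set_tree L1 \<subset> set_tree T1" and "set_tree R1 \<subset> set_tree T1"
      using blocks(2,3) by blast+
    moreover have "set_tree L2 \<subseteq> set_tree T2" and "set_tree R2 \<subseteq> set_tree T2"
      using blocks(4) by blast+
    ultimately have "card (set_tree L1) + card (set_tree L2) < card (set_tree T1) + card (set_tree T2)"
      and "card (set_tree R1) + card (set_tree R2) < card (set_tree T1) + card (set_tree T2)"
      by (simp_all add: add_less_le_mono psubset_card_mono card_mono)
    moreover have "set_tree L1 \<inter> set_tree L2 = {}" and "set_tree R1 \<inter> set_tree R2 = {}"
      using blocks(2-4) less.prems(3) by blast+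
    ultimately obtain TL wL TR wR where
      "mergeHT_run split join scost jcost L1 L2 TL wL" and "mergeHT_run split join scost jcost R1 R2 TR wR"
      using less.hyps blocks(1) by meson
    then show ?thesis
      using mergeHT_run.node[OF T1 \<open>T2 \<noteq> Leaf\<close> split_T2 split_T1 refl split_I refl] by blast
  qed
qed

lemma mergeHT_run_correct:
  "mergeHT_run split join scost jcost T1 T2 T w \<Longrightarrow> bst T1 \<Longrightarrow> bst T2 \<Longrightarrow>
     set_tree T1 \<inter> set_tree T2 = {} \<Longrightarrow> bst T \<and> set_tree T = set_tree T1 \<union> set_tree T2"
proof (induction rule: mergeHT_run.induct)
  case (node T1 l k r T2 L2 R2 L1 I c1 M R1 c2 TL wL TR wR)
  note blocks = mergeHT_node_blocks[OF node.prems node.hyps(1,3,4,6)]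
  have "set_tree L1 \<inter> set_tree L2 = {}" and "set_tree R1 \<inter> set_tree R2 = {}"
    using blocks(2-4) node.prems(3) by blast+
  then have TL: "bst TL" "set_tree TL = set_tree L1 \<union> set_tree L2"
    and TR: "bst TR" "set_tree TR = set_tree R1 \<union> set_tree R2"
    using node.IH blocks(1) by blast+
  have "\<forall>x\<in>set_tree TL. \<forall>y\<in>set_tree M. x < y" and "\<forall>x\<in>set_tree TL \<union> set_tree M. \<forall>y\<in>set_tree TR. x < y"
    using blocks(5) pivot_blocks_less[OF blocks(5)] unfolding TL(2) TR(2) pivot_blocks_def by blast+
  with blocks(1) have "bst (join (join TL M) TR)"
    and "set_tree (join (join TL M) TR) = set_tree TL \<union> set_tree M \<union> set_tree TR"
    using join_join(1)[OF TL(1) _ TR(1)] by blast+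
  then show ?case
    using blocks(2-4) TL(2) TR(2) by auto
qed simp_all

lemma mergeHT_run_amortized:
  "mergeHT_run split join scost jcost T1 T2 T w \<Longrightarrow> bst T1 \<Longrightarrow> bst T2 \<Longrightarrow>
     set_tree T1 \<inter> set_tree T2 = {} \<Longrightarrow>
     w + \<Phi> T - \<Phi> T1 - \<Phi> T2 + c * merge_credit (size T1) (size T2)
       \<le> (2 + 7 * c) * (group_cost (set_tree T1) (set_tree T2) + group_cost (set_tree T2) (set_tree T1)) + 1"
proof (induction rule: mergeHT_run.induct)
  case (empty1 T2)
  have "2 * c * lg (size T2) \<le> (2 + 7 * c) * lg (size T2)"
    using c_nonneg lg_nonneg by (intro mult_right_mono) auto
  with empty1 show ?case
    by (simp add: merge_credit_def pot_Leaf size_eq_card_if_bst)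
next
  case (empty2 T1)
  have "2 * c * lg (size T1) \<le> (2 + 7 * c) * lg (size T1)"
    using c_nonneg lg_nonneg by (intro mult_right_mono) auto
  with empty2 show ?case
    by (simp add: merge_credit_def pot_Leaf size_eq_card_if_bst)
next
  case (node T1 l k t T2 L2 R2 L1 I c1 M R1 c2 TL wL TR wR)
  note blocks = mergeHT_node_blocks[OF node.prems node.hyps(1,3,4,6)]
  define a p m r q where "a = size L1" "p = size L2" "m = size M" "r = size R1" "q = size R2"
  define GL GR where "GL = group_cost (set_tree L1) (set_tree L2) + group_cost (set_tree L2) (set_tree L1)"
    and "GR = group_cost (set_tree R1) (set_tree R2) + group_cost (set_tree R2) (set_tree R1)"
  have bsts: "bst L1" "bst L2" "bst M" "bst R1" "bst R2"
    using blocks(1) by blast+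
  have disj_L: "set_tree L1 \<inter> set_tree L2 = {}" and disj_R: "set_tree R1 \<inter> set_tree R2 = {}"
    using blocks(2-4) node.prems(3) by blast+
  have "bst TL" "set_tree TL = set_tree L1 \<union> set_tree L2" and "bst TR" "set_tree TR = set_tree R1 \<union> set_tree R2"
    using mergeHT_run_correct[OF node.hyps(8)] mergeHT_run_correct[OF node.hyps(9)] bsts disj_L disj_R
    by blast+
  note local = mergeHT_node_cost[OF node.prems node.hyps(1,3-7) this, folded a_p_m_r_q_def]
  have IH_L: "wL + \<Phi> TL - \<Phi> L1 - \<Phi> L2 + c * merge_credit a p \<le> (2 + 7 * c) * GL + 1"
    using node.IH(1)[OF bsts(1,2) disj_L] unfolding a_p_m_r_q_def GL_def .
  have IH_R: "wR + \<Phi> TR - \<Phi> R1 - \<Phi> R2 + c * merge_credit r q \<le> (2 + 7 * c) * GR + 1"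
    using node.IH(2)[OF bsts(4,5) disj_R] unfolding a_p_m_r_q_def GR_def .
  have "set_tree T1 = set_tree L1 \<union> set_tree M \<union> set_tree R1"
    using blocks(2,3) by blast
  then have groups: "group_cost (set_tree T1) (set_tree T2) + group_cost (set_tree T2) (set_tree T1)
                       = GL + GR + lg m"
    using group_cost_pivot_blocks[OF blocks(5)] blocks(4) bsts(3)
    unfolding GL_def GR_def a_p_m_r_q_def by (simp add: size_eq_card_if_bst)
  have "1 \<le> m"
    using blocks(5) unfolding a_p_m_r_q_def pivot_blocks_def by (cases M) auto
  then have "c * (lg (min p q) + lg (min a (m + r)) + lg (min m r) + lg (min (a + p) m)
               + lg (min (a + p + m) (r + q)) + merge_credit (a + m + r) (p + q))
             \<le> c * (merge_credit a p + merge_credit r q + 7 * lg m)"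
    by (intro mult_left_mono merge_step_lg_bound c_nonneg)
  moreover have "2 + 7 * (c * lg m) \<le> (2 + 7 * c) * lg m"
    using lg_ge_1[OF \<open>1 \<le> m\<close>] c_nonneg by (simp add: algebra_simps)
  ultimately show ?case
    using local IH_L IH_R unfolding groups local(1,2) distrib_left by linarith
qed

lemma mergeHT_run_work_bound:
  assumes "mergeHT_run split join scost jcost T1 T2 T w" "bst T1" "bst T2" "set_tree T1 \<inter> set_tree T2 = {}"
  shows "w + \<Phi> T - \<Phi> T1 - \<Phi> T2
           \<le> (2 + 7 * c) * (1 + group_cost (set_tree T1) (set_tree T2) + group_cost (set_tree T2) (set_tree T1))"
proof -
  have "0 \<le> c * merge_credit (size T1) (size T2)"
    using c_nonneg merge_credit_nonneg by simp
  moreover have "(2 + 7 * c) * (1 + group_cost (set_tree T1) (set_tree T2) + group_cost (set_tree T2) (set_tree T1))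
      = 2 + 7 * c + (2 + 7 * c) * (group_cost (set_tree T1) (set_tree T2) + group_cost (set_tree T2) (set_tree T1))"
    by (simp add: algebra_simps)
  ultimately show ?thesis
    using mergeHT_run_amortized[OF assms] c_nonneg by linarith
qed

end

theorem lemma9:
  fixes split :: "'k::linorder tree \<Rightarrow> 'k \<Rightarrow> 'k tree \<times> 'k tree"
    and join :: "'k tree \<Rightarrow> 'k tree \<Rightarrow> 'k tree"
    and scost :: "'k tree \<Rightarrow> 'k \<Rightarrow> real"
    and jcost :: "'k tree \<Rightarrow> 'k tree \<Rightarrow> real"
    and \<Phi> :: "'k tree \<Rightarrow> real"
    and c :: real
  assumes split_spec: "\<And>T k L R. bst T \<Longrightarrow> split T k = (L, R) \<Longrightarrow>
             bst L \<and> bst R \<and> set_tree L = {x \<in> set_tree T. x < k} \<and> set_tree R = {x \<in> set_tree T. k < x}"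
    and join_spec: "\<And>A B. bst A \<Longrightarrow> bst B \<Longrightarrow> (\<forall>x\<in>set_tree A. \<forall>y\<in>set_tree B. x < y) \<Longrightarrow>
             bst (join A B) \<and> set_tree (join A B) = set_tree A \<union> set_tree B"
    and pot_nonneg: "\<And>T. 0 \<le> \<Phi> T"
    and scost_nonneg: "\<And>T k. 0 \<le> scost T k"
    and jcost_nonneg: "\<And>A B. 0 \<le> jcost A B"
    and split_amortized: "\<And>T k L R. bst T \<Longrightarrow> split T k = (L, R) \<Longrightarrow>
             scost T k + \<Phi> L + \<Phi> R - \<Phi> T \<le> c * log 2 (real (min (size L) (size R)) + 1)"
    and join_amortized: "\<And>A B. bst A \<Longrightarrow> bst B \<Longrightarrow> (\<forall>x\<in>set_tree A. \<forall>y\<in>set_tree B. x < y) \<Longrightarrow>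
             jcost A B + \<Phi> (join A B) - \<Phi> A - \<Phi> B \<le> c * log 2 (real (min (size A) (size B)) + 1)"
  shows "(\<forall>T1 T2. bst T1 \<longrightarrow> bst T2 \<longrightarrow> set_tree T1 \<inter> set_tree T2 = {} \<longrightarrow>
            (\<exists>T w. mergeHT_run split join scost jcost T1 T2 T w)) \<and>
         (\<exists>C>0. \<forall>T1 T2 T w. bst T1 \<longrightarrow> bst T2 \<longrightarrow> set_tree T1 \<inter> set_tree T2 = {} \<longrightarrow>
            mergeHT_run split join scost jcost T1 T2 T w \<longrightarrow>
              bst T \<and> set_tree T = set_tree T1 \<union> set_tree T2 \<and>
              w + \<Phi> T - \<Phi> T1 - \<Phi> T2 \<le>
                C * (1 + (\<Sum>S\<in>groups (set_tree T1) (set_tree T2). log 2 (real (card S) + 1))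
                       + (\<Sum>S\<in>groups (set_tree T2) (set_tree T1). log 2 (real (card S) + 1))))"
proof -
  interpret amortized_split_join split join scost jcost \<Phi> "max c 0"
  proof
    have max_c: "c * lg n \<le> max c 0 * lg n" for n
      by (intro mult_right_mono lg_nonneg) simp
    show "scost T k + \<Phi> L + \<Phi> R - \<Phi> T \<le> max c 0 * lg (min (size L) (size R))"
      if "bst T" "split T k = (L, R)" for T k L R
      using split_amortized[OF that] max_c[of "min (size L) (size R)"] unfolding lg_def by linarith
    show "jcost A B + \<Phi> (join A B) - \<Phi> A - \<Phi> B \<le> max c 0 * lg (min (size A) (size B))"
      if "bst A" "bst B" "\<forall>x\<in>set_tree A. \<forall>y\<in>set_tree B. x < y" for A B
      using join_amortized[OF that] max_c[of "min (size A) (size B)"] unfolding lg_def by linarith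
  qed (fact split_spec join_spec pot_nonneg scost_nonneg | simp)+
  have group_sum: "(\<Sum>S\<in>groups A B. log 2 (real (card S) + 1)) = group_cost A B" for A B :: "'k set"
    by (simp add: group_cost_def lg_def)
  show ?thesis
    unfolding group_sum
  proof (intro conjI exI[of _ "2 + 7 * max c 0"] allI impI)
    show "0 < 2 + 7 * max c 0"
      by (simp add: add_pos_nonneg)
  qed (simp_all add: mergeHT_run_exists mergeHT_run_correct mergeHT_run_work_bound)
qed

end
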